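(* Let $N\in\mathbb{N}$ and let $F,G,H$ be positive-semidefinite $N\times N$ Hermitian matrices with $0\preceq H\preceq F$. Consider the semidefinite program \[ \min\ \operatorname{tr}[HX]\quad\text{s.t.}\quad \operatorname{tr}[FX]=1,\quad \operatorname{tr}[GX]=0,\quad X\succeq 0, \] over $N\times N$ Hermitian matrices $X$, and assume it is feasible. Then it is equivalent to the quadratic optimization problem \[ \min\ x^\dagger H x\quad\text{s.t.}\quad x^\dagger F x=1,\quad x\in\ker G,\quad x\perp(\ker F\cap\ker G), \] in the sense that both have the same optimal value and for every optimal $x$ of the quadratic problem, $X=xx^\dagger$ is optimal for the semidefinite program.
   Context: $A\preceq B$ means $B-A$ is positive-semidefinite. For a positive-semidefinite $G$, $x^\dagger Gx=0$ is equivalent to $x\in\ker G$. *)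

theory Defs
  imports "HOL-Analysis.Analysis"
begin

text \<open>N x N complex matrices are rendered as complex^'n^'n with 'n a finite type, CARD('n) = N.\<close>

definition conj_transpose :: "complex^'n^'n \<Rightarrow> complex^'n^'n" where
  "conj_transpose A = (\<chi> i j. cnj (A $ j $ i))"

definition hermitian_mat :: "complex^'n^'n \<Rightarrow> bool" where
  "hermitian_mat A \<longleftrightarrow> conj_transpose A = A"

definition qform :: "complex^'n^'n \<Rightarrow> complex^'n \<Rightarrow> complex" where
  "qform A x = (\<Sum>i\<in>UNIV. \<Sum>j\<in>UNIV. cnj (x $ i) * A $ i $ j * x $ j)"

definition psd :: "complex^'n^'n \<Rightarrow> bool" where
  "psd A \<longleftrightarrow> hermitian_mat A \<and> (\<forall>x. Im (qform A x) = 0 \<and> 0 \<le> Re (qform A x))"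

definition loewner_le :: "complex^'n^'n \<Rightarrow> complex^'n^'n \<Rightarrow> bool" where
  "loewner_le A B \<longleftrightarrow> psd (B - A)"

definition ker_mat :: "complex^'n^'n \<Rightarrow> (complex^'n) set" where
  "ker_mat A = {x. A *v x = 0}"

definition cinner :: "complex^'n \<Rightarrow> complex^'n \<Rightarrow> complex" where
  "cinner y x = (\<Sum>i\<in>UNIV. cnj (y $ i) * x $ i)"

definition outer :: "complex^'n \<Rightarrow> complex^'n^'n" where
  "outer x = (\<chi> i j. x $ i * cnj (x $ j))"

definition sdp_feasible :: "complex^'n^'n \<Rightarrow> complex^'n^'n \<Rightarrow> complex^'n^'n \<Rightarrow> bool" where
  "sdp_feasible F G X \<longleftrightarrow> psd X \<and> trace (F ** X) = 1 \<and> trace (G ** X) = 0"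

definition qp_feasible :: "complex^'n^'n \<Rightarrow> complex^'n^'n \<Rightarrow> complex^'n \<Rightarrow> bool" where
  "qp_feasible F G x \<longleftrightarrow> qform F x = 1 \<and> x \<in> ker_mat G \<and>
     (\<forall>y\<in>ker_mat F \<inter> ker_mat G. cinner y x = 0)"

definition sdp_value :: "complex^'n^'n \<Rightarrow> complex^'n^'n \<Rightarrow> complex^'n^'n \<Rightarrow> real" where
  "sdp_value H F G = Inf {Re (trace (H ** X)) | X. sdp_feasible F G X}"

definition qp_value :: "complex^'n^'n \<Rightarrow> complex^'n^'n \<Rightarrow> complex^'n^'n \<Rightarrow> real" where
  "qp_value H F G = Inf {Re (qform H x) | x. qp_feasible F G x}"

definition sdp_optimal :: "complex^'n^'n \<Rightarrow> complex^'n^'n \<Rightarrow> complex^'n^'n \<Rightarrow> complex^'n^'n \<Rightarrow> bool" where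
  "sdp_optimal H F G X \<longleftrightarrow> sdp_feasible F G X \<and>
     (\<forall>Y. sdp_feasible F G Y \<longrightarrow> Re (trace (H ** X)) \<le> Re (trace (H ** Y)))"

definition qp_optimal :: "complex^'n^'n \<Rightarrow> complex^'n^'n \<Rightarrow> complex^'n^'n \<Rightarrow> complex^'n \<Rightarrow> bool" where
  "qp_optimal H F G x \<longleftrightarrow> qp_feasible F G x \<and>
     (\<forall>y. qp_feasible F G y \<longrightarrow> Re (qform H x) \<le> Re (qform H y))"

end

theory Submission
  imports Defs
begin

(* Every positive semidefinite X is a sum of rank-one matrices b_k b_k^* (Cholesky-type
   elimination), so for feasible X the constraints read  sum_k b_k^* F b_k = 1  and  b_k in ker G,
   and  tr[HX] = sum_k b_k^* H b_k.  Since H <= F forces ker F to lie in ker H, projecting b_k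
   orthogonally onto the complement of  ker F /\ ker G  changes neither b_k^* F b_k nor b_k^* H b_k;
   after normalisation every b_k with b_k^* F b_k > 0 becomes a feasible point of the quadratic
   problem with value  b_k^* H b_k / b_k^* F b_k.  The weights b_k^* F b_k sum to 1 and average
   these ratios to at most tr[HX], so one of them is at most tr[HX].  Conversely x x^* is feasible
   for the SDP with value x^* H x. *)

definition sesq_form :: "complex^'n^'n \<Rightarrow> complex^'n \<Rightarrow> complex^'n \<Rightarrow> complex" where
  "sesq_form A u v = (\<Sum>i\<in>UNIV. \<Sum>j\<in>UNIV. cnj (u $ i) * A $ i $ j * v $ j)"

lemma qform_eq_sesq_form: "qform A x = sesq_form A x x"
  by (simp add: qform_def sesq_form_def)

lemma sesq_form_add_left: "sesq_form A (u + v) w = sesq_form A u w + sesq_form A v w"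
  by (simp add: sesq_form_def sum.distrib[symmetric] algebra_simps)

lemma sesq_form_add_right: "sesq_form A u (v + w) = sesq_form A u v + sesq_form A u w"
  by (simp add: sesq_form_def sum.distrib[symmetric] algebra_simps)

lemma sesq_form_scale_left: "sesq_form A (c *s u) v = cnj c * sesq_form A u v"
  by (simp add: sesq_form_def sum_distrib_left algebra_simps)

lemma sesq_form_scale_right: "sesq_form A u (c *s v) = c * sesq_form A u v"
  by (simp add: sesq_form_def sum_distrib_left algebra_simps)

lemma sesq_form_eq_cinner: "sesq_form A u v = cinner u (A *v v)"
  by (simp add: sesq_form_def cinner_def matrix_vector_mult_def sum_distrib_left mult.assoc)

lemma qform_diff: "qform (A - B) x = qform A x - qform B x"
  by (simp add: qform_def sum_subtractf[symmetric] algebra_simps)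

lemma qform_scale: "qform A (c *s x) = cnj c * c * qform A x"
  by (simp add: qform_eq_sesq_form sesq_form_scale_left sesq_form_scale_right)

lemma cinner_scale_left: "cinner (c *s x) y = cnj c * cinner x y"
  by (simp add: cinner_def sum_distrib_left mult_ac)

lemma cinner_scale_right: "cinner x (c *s y) = c * cinner x y"
  by (simp add: cinner_def sum_distrib_left mult_ac)

lemma cinner_zero_right [simp]: "cinner x 0 = 0"
  by (simp add: cinner_def)

lemma Re_cinner_eq_inner: "Re (cinner x y) = inner x y"
  by (simp add: cinner_def inner_vec_def inner_complex_def Re_sum)

lemma cinner_self: "cinner z z = of_real (\<Sum>i\<in>UNIV. (cmod (z $ i))\<^sup>2)"
  unfolding cinner_def of_real_sum
  by (rule sum.cong) (simp_all add: complex_norm_square mult.commute del: of_real_power)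

lemma cinner_self_eq_0: "cinner z z = 0 \<longleftrightarrow> z = 0"
proof
  assume "cinner z z = 0"
  then have "(\<Sum>i\<in>UNIV. (cmod (z $ i))\<^sup>2) = 0"
    by (simp only: cinner_self of_real_eq_0_iff)
  then show "z = 0"
    by (simp add: sum_nonneg_eq_0_iff vec_eq_iff)
qed (simp add: cinner_def)

lemma cinner_axis_left: "cinner (axis i 1) y = y $ i"
  unfolding cinner_def axis_def vec_lambda_beta if_distrib [of cnj] complex_cnj_one complex_cnj_zero
  by (simp flip: of_bool_def)

lemma hermitian_iff: "hermitian_mat A \<longleftrightarrow> (\<forall>i j. cnj (A $ j $ i) = A $ i $ j)"
  by (simp add: hermitian_mat_def conj_transpose_def vec_eq_iff)

lemma hermitian_diff: "hermitian_mat A \<Longrightarrow> hermitian_mat B \<Longrightarrow> hermitian_mat (A - B)"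
  by (simp add: hermitian_iff)

lemma sesq_form_swap:
  assumes "hermitian_mat A"
  shows "sesq_form A v u = cnj (sesq_form A u v)"
proof -
  have A: "cnj (A $ i $ j) = A $ j $ i" for i j
    using assms by (simp add: hermitian_iff)
  have "sesq_form A v u = (\<Sum>j\<in>UNIV. \<Sum>i\<in>UNIV. cnj (v $ i) * A $ i $ j * u $ j)"
    unfolding sesq_form_def by (rule sum.swap)
  also have "\<dots> = cnj (sesq_form A u v)"
    unfolding sesq_form_def cnj_sum complex_cnj_mult complex_cnj_cnj A by (simp only: mult_ac)
  finally show ?thesis .
qed

lemma hermitian_qform_real: "hermitian_mat A \<Longrightarrow> Im (qform A x) = 0"
  using sesq_form_swap[of A x x] by (simp add: qform_eq_sesq_form complex_eq_iff)

lemma psdI: "hermitian_mat A \<Longrightarrow> (\<And>x. 0 \<le> Re (qform A x)) \<Longrightarrow> psd A"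
  using hermitian_qform_real unfolding psd_def by blast

lemma psd_qform_real: "psd A \<Longrightarrow> qform A x = of_real (Re (qform A x))"
  unfolding psd_def by (simp add: complex_eq_iff)

lemma nonneg_quadratic_discriminant:
  fixes a b c :: real
  assumes "0 \<le> c" and nonneg: "\<And>t. 0 \<le> a + 2 * b * t + c * t\<^sup>2"
  shows "b\<^sup>2 \<le> a * c"
proof (cases "c = 0")
  case True
  have "b = 0"
  proof (rule ccontr)
    assume "b \<noteq> 0"
    then show False
      using nonneg[of "- (a + 1) / (2 * b)"] True by (simp add: field_simps)
  qed
  then show ?thesis using True by simp
next
  case False
  with \<open>0 \<le> c\<close> have "0 < c" by simp
  have "0 \<le> a + 2 * b * (- b / c) + c * (- b / c)\<^sup>2" by (rule nonneg)
  also have "\<dots> = (a * c - b\<^sup>2) / c"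
    using \<open>0 < c\<close> by (simp add: field_simps power2_eq_square)
  finally show ?thesis using \<open>0 < c\<close> by (simp add: zero_le_divide_iff)
qed

lemma psd_cauchy_schwarz:
  assumes "psd A"
  shows "(cmod (sesq_form A u v))\<^sup>2 \<le> Re (qform A u) * Re (qform A v)"
proof -
  define c where "c = sesq_form A u v"
  define a where "a = Re (qform A u)"
  define b where "b = Re (qform A v)"
  have hA: "hermitian_mat A" using assms by (simp add: psd_def)
  have a: "qform A u = of_real a" and b: "qform A v = of_real b"
    using psd_qform_real[OF assms] by (simp_all add: a_def b_def)
  have "0 \<le> a + 2 * (- (cmod c)\<^sup>2) * t + ((cmod c)\<^sup>2 * b) * t\<^sup>2" for t
  proof -
    define m where "m = - (of_real t * cnj c)"
    have "qform A (u + m *s v) = qform A u + m * c + cnj m * cnj c + cnj m * m * qform A v"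
      using sesq_form_swap[OF hA, of u v]
      by (simp add: qform_eq_sesq_form sesq_form_add_left sesq_form_add_right
          sesq_form_scale_left sesq_form_scale_right c_def algebra_simps)
    also have "\<dots> = of_real a - 2 * of_real t * (c * cnj c) + (of_real t)\<^sup>2 * (c * cnj c) * of_real b"
      by (simp add: m_def a b algebra_simps power2_eq_square)
    also have "\<dots> = of_real (a - 2 * t * (cmod c)\<^sup>2 + t\<^sup>2 * (cmod c)\<^sup>2 * b)"
      by (simp flip: complex_norm_square)
    finally have "Re (qform A (u + m *s v)) = a - 2 * t * (cmod c)\<^sup>2 + t\<^sup>2 * (cmod c)\<^sup>2 * b"
      by simp
    moreover have "0 \<le> Re (qform A (u + m *s v))" using assms by (simp add: psd_def)
    ultimately show ?thesis by (simp add: algebra_simps)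
  qed
  moreover have "0 \<le> a" "0 \<le> b" using assms by (simp_all add: psd_def a_def b_def)
  ultimately have "((cmod c)\<^sup>2)\<^sup>2 \<le> a * ((cmod c)\<^sup>2 * b)"
    using nonneg_quadratic_discriminant by (metis power2_minus zero_le_mult_iff zero_le_power2)
  then have sq: "(cmod c)\<^sup>2 * (cmod c)\<^sup>2 \<le> (cmod c)\<^sup>2 * (a * b)"
    by (simp add: power2_eq_square mult_ac)
  have "(cmod c)\<^sup>2 \<le> a * b" if "c \<noteq> 0"
    using mult_left_le_imp_le[OF sq] that by simp
  then have "(cmod c)\<^sup>2 \<le> a * b"
    using \<open>0 \<le> a\<close> \<open>0 \<le> b\<close> by (cases "c = 0") auto
  then show ?thesis by (simp add: c_def a_def b_def)
qed

lemma psd_qform_eq_0_imp_kernel: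
  assumes "psd A" and "qform A x = 0"
  shows "A *v x = 0"
proof -
  have "(cmod (sesq_form A (A *v x) x))\<^sup>2 \<le> 0"
    using psd_cauchy_schwarz[OF assms(1), of "A *v x" x] assms(2) by simp
  then have "cinner (A *v x) (A *v x) = 0"
    by (simp add: sesq_form_eq_cinner)
  then show ?thesis by (simp add: cinner_self_eq_0)
qed

lemma matrix_vector_mult_axis: "A *v axis i 1 = column i (A :: 'a::comm_semiring_1^'n^'m)"
  by (simp add: vec_eq_iff matrix_vector_mult_def axis_def column_def if_distrib cong: if_cong)

lemma qform_axis: "qform A (axis i 1) = A $ i $ i"
  by (simp add: qform_eq_sesq_form sesq_form_eq_cinner matrix_vector_mult_axis cinner_axis_left column_def)

lemma psd_diag_eq_0_imp_column_eq_0: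
  assumes "psd A" and "A $ i $ i = 0"
  shows "A $ k $ i = 0" and "A $ i $ k = 0"
proof -
  have "A *v axis i 1 = 0"
    by (rule psd_qform_eq_0_imp_kernel[OF assms(1)]) (simp add: qform_axis assms(2))
  then show col: "A $ k $ i = 0"
    by (simp add: matrix_vector_mult_axis column_def vec_eq_iff)
  moreover have "hermitian_mat A" using assms(1) by (simp add: psd_def)
  ultimately show "A $ i $ k = 0"
    by (metis complex_cnj_zero hermitian_iff)
qed

lemma qform_outer: "qform (outer b) x = cinner x b * cnj (cinner x b)"
  unfolding qform_def outer_def cinner_def vec_lambda_beta cnj_sum complex_cnj_mult complex_cnj_cnj sum_product
  by (simp only: mult_ac)

lemma hermitian_outer: "hermitian_mat (outer b)"
  by (simp add: hermitian_iff outer_def)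

lemma psd_outer: "psd (outer b)"
  by (rule psdI) (simp_all add: hermitian_outer qform_outer flip: complex_norm_square)

lemma outer_zero [simp]: "outer 0 = 0"
  by (simp add: outer_def vec_eq_iff)

lemma trace_mult_outer: "trace (A ** outer b) = qform A b"
  unfolding trace_def matrix_matrix_mult_def outer_def qform_def vec_lambda_beta
  by (simp only: mult_ac)

lemma trace_mult_sum:
  fixes A :: "'a::comm_semiring_1^'n^'n"
  shows "trace (A ** (\<Sum>k\<in>S. B k)) = (\<Sum>k\<in>S. trace (A ** B k))"
proof (induction S rule: infinite_finite_induct)
  case (insert x S)
  then show ?case by (simp add: matrix_add_ldistrib trace_add)
qed (simp_all add: trace_def matrix_matrix_mult_def)

lemma psd_minus_outer_column:
  assumes "psd R" and r: "R $ j $ j = of_real r" "0 < r"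
  defines "c \<equiv> of_real (1 / sqrt r) *s column j R"
  shows "psd (R - outer c)" and "(R - outer c) $ j $ j = 0"
    and "R $ i $ i = 0 \<Longrightarrow> (R - outer c) $ i $ i = 0"
proof -
  have cinner_c: "cinner x c = sesq_form R x (axis j 1) / of_real (sqrt r)" for x
    by (simp add: c_def cinner_scale_right sesq_form_eq_cinner matrix_vector_mult_axis)
  show "psd (R - outer c)"
  proof (rule psdI)
    show "hermitian_mat (R - outer c)"
      using assms(1) by (simp add: hermitian_diff hermitian_outer psd_def)
    fix x
    have "Re (qform (outer c) x) = (cmod (sesq_form R x (axis j 1)))\<^sup>2 / r"
      using r(2) by (simp add: qform_outer cinner_c norm_divide power_divide flip: complex_norm_square)
    also have "\<dots> \<le> Re (qform R x)"
      using psd_cauchy_schwarz[OF assms(1), of x "axis j 1"] r by (simp add: qform_axis divide_le_eq)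
    finally show "0 \<le> Re (qform (R - outer c) x)"
      by (simp add: qform_diff)
  qed
  have "c $ j = of_real (r / sqrt r)"
    using r by (simp add: c_def column_def flip: of_real_mult)
  also have "r / sqrt r = sqrt r"
    using r(2) by (simp add: real_div_sqrt)
  finally have "c $ j = of_real (sqrt r)" .
  then show "(R - outer c) $ j $ j = 0"
    using r by (simp add: outer_def flip: of_real_mult)
  show "(R - outer c) $ i $ i = 0" if "R $ i $ i = 0"
    using psd_diag_eq_0_imp_column_eq_0[OF assms(1) that] that by (simp add: outer_def c_def column_def)
qed

lemma psd_eq_partial_sum_outer_plus_psd:
  assumes "psd X" and "finite S"
  shows "\<exists>b R. X = (\<Sum>k\<in>S. outer (b k)) + R \<and> psd R \<and> (\<forall>i\<in>S. R $ i $ i = 0)"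
  using assms(2)
proof (induction S rule: finite_induct)
  case empty
  show ?case using assms(1) by (intro exI[of _ "\<lambda>_. 0"] exI[of _ X]) simp
next
  case (insert j S)
  then obtain b R where X: "X = (\<Sum>k\<in>S. outer (b k)) + R" and R: "psd R"
    and diag: "\<forall>i\<in>S. R $ i $ i = 0"
    by blast
  have split: "(\<Sum>k\<in>insert j S. outer ((b(j := c)) k)) = outer c + (\<Sum>k\<in>S. outer (b k))" for c
  proof -
    have "(\<Sum>k\<in>S. outer ((b(j := c)) k)) = (\<Sum>k\<in>S. outer (b k))"
      using insert(2) by (intro sum.cong) auto
    then show ?thesis using insert(1,2) by simp
  qed
  define r where "r = Re (R $ j $ j)"
  have Rjj: "R $ j $ j = of_real r"
    using psd_qform_real[OF R, of "axis j 1"] by (simp only: qform_axis r_def)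
  have "0 \<le> r"
    using R unfolding psd_def r_def by (metis qform_axis)
  show ?case
  proof (cases "r = 0")
    case True
    then have "X = (\<Sum>k\<in>insert j S. outer ((b(j := 0)) k)) + R"
      unfolding split using X by simp
    then show ?thesis
      using R diag Rjj True by (intro exI[of _ "b(j := 0)"] exI[of _ R]) simp
  next
    case False
    with \<open>0 \<le> r\<close> have "0 < r" by simp
    define c where "c = of_real (1 / sqrt r) *s column j R"
    note step = psd_minus_outer_column[OF R Rjj \<open>0 < r\<close>, folded c_def]
    have "X = (\<Sum>k\<in>insert j S. outer ((b(j := c)) k)) + (R - outer c)"
      unfolding split using X by simp
    moreover have "\<forall>i\<in>insert j S. (R - outer c) $ i $ i = 0"
      using step(2,3) diag by simp
    ultimately show ?thesis
      using step(1) by (intro exI[of _ "b(j := c)"] exI[of _ "R - outer c"]) simp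
  qed
qed

lemma psd_eq_sum_outer:
  fixes X :: "complex^'n^'n"
  assumes "psd X"
  obtains b :: "'n \<Rightarrow> complex^'n" where "X = (\<Sum>k\<in>UNIV. outer (b k))"
proof -
  obtain b :: "'n \<Rightarrow> complex^'n" and R where X: "X = (\<Sum>k\<in>UNIV. outer (b k)) + R"
    and R: "psd R" and diag: "\<forall>i. R $ i $ i = 0"
    using psd_eq_partial_sum_outer_plus_psd[OF assms finite] by blast
  have "R = 0" using psd_diag_eq_0_imp_column_eq_0[OF R] diag by (simp add: vec_eq_iff)
  with X show thesis by (intro that) simp
qed

lemma qform_add_kernel:
  assumes "hermitian_mat A" and "A *v q = 0"
  shows "qform A (q + p) = qform A p"
proof -
  have "sesq_form A q q = 0" and "sesq_form A p q = 0"
    using assms(2) by (simp_all add: sesq_form_eq_cinner)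
  moreover have "sesq_form A q p = 0"
    using sesq_form_swap[OF assms(1), of p q] calculation by simp
  ultimately show ?thesis
    by (simp add: qform_eq_sesq_form sesq_form_add_left sesq_form_add_right)
qed

lemma loewner_le_imp_ker_subset:
  assumes "psd H" and "loewner_le H F"
  shows "ker_mat F \<subseteq> ker_mat H"
proof
  fix q assume "q \<in> ker_mat F"
  then have "qform F q = 0"
    by (simp add: ker_mat_def qform_eq_sesq_form sesq_form_eq_cinner)
  moreover have "0 \<le> Re (qform (F - H) q)" and "0 \<le> Re (qform H q)"
    using assms by (simp_all add: loewner_le_def psd_def)
  ultimately have "qform H q = 0"
    using psd_qform_real[OF assms(1), of q] by (simp add: qform_diff)
  then show "q \<in> ker_mat H"
    using psd_qform_eq_0_imp_kernel[OF assms(1)] by (simp add: ker_mat_def)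
qed

lemma subspace_ker_mat: "subspace (ker_mat (A :: complex^'n^'n))"
proof -
  have "A *v (r *\<^sub>R x) = r *\<^sub>R (A *v x)" for r x
    by (simp add: vec_eq_iff matrix_vector_mult_def scaleR_sum_right)
  then show ?thesis
    by (auto simp: subspace_def ker_mat_def matrix_vector_right_distrib)
qed

lemma complex_orthogonal_decomposition:
  fixes K :: "(complex^'n) set"
  assumes "subspace K" and "\<And>c k. k \<in> K \<Longrightarrow> c *s k \<in> K"
  obtains q p where "q \<in> K" and "\<And>k. k \<in> K \<Longrightarrow> cinner k p = 0" and "v = q + p"
proof -
  obtain q p where q: "q \<in> span K" and p: "\<And>w. w \<in> span K \<Longrightarrow> orthogonal p w" and v: "v = q + p"
    using orthogonal_subspace_decomp_exists[of K v] by blast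
  have "cinner k p = 0" if "k \<in> K" for k
  proof -
    \<comment> \<open>The real inner product is Re cinner, so real orthogonality to k and to i k suffices.\<close>
    have "inner p k = 0" and "inner p (\<i> *s k) = 0"
      using p[OF span_base] that assms(2) by (simp_all add: orthogonal_def)
    then have "Re (cinner k p) = 0" and "Re (cinner (\<i> *s k) p) = 0"
      by (simp_all add: Re_cinner_eq_inner inner_commute)
    then show ?thesis
      by (simp add: cinner_scale_left complex_eq_iff)
  qed
  moreover have "q \<in> K"
    using q assms(1) by (metis span_eq_iff)
  ultimately show thesis
    using v that by blast
qed

lemma qp_feasible_rescaled_projection:
  fixes F G H :: "complex^'n^'n"
  assumes F: "psd F" and H: "psd H" and HF: "loewner_le H F"
    and Gv: "G *v v = 0" and pos: "0 < Re (qform F v)"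
  obtains y where "qp_feasible F G y" and "Re (qform H y) * Re (qform F v) = Re (qform H v)"
proof -
  define K where "K = ker_mat F \<inter> ker_mat G"
  have "subspace K"
    unfolding K_def by (intro subspace_inter subspace_ker_mat)
  moreover have "c *s k \<in> K" if "k \<in> K" for c k
    using that by (simp add: K_def ker_mat_def vector_scalar_commute)
  ultimately obtain q p where qK: "q \<in> K" and orth: "\<And>k. k \<in> K \<Longrightarrow> cinner k p = 0"
    and v: "v = q + p"
    using complex_orthogonal_decomposition by blast
  have Hq: "H *v q = 0"
    using qK loewner_le_imp_ker_subset[OF H HF] by (auto simp: K_def ker_mat_def)
  have Fp: "qform F p = qform F v" and Hp: "qform H p = qform H v"
    using qform_add_kernel[of F q p] qform_add_kernel[OF _ Hq, of p] qK F H v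
    by (simp_all add: psd_def K_def ker_mat_def)
  have Gp: "G *v p = 0"
    using Gv qK v by (simp add: K_def ker_mat_def matrix_vector_right_distrib)
  define f where "f = Re (qform F v)"
  define s where "s = (of_real (1 / sqrt f) :: complex)"
  have "0 < f" and Fv: "qform F v = of_real f"
    using pos psd_qform_real[OF F] by (simp_all add: f_def)
  have s: "cnj s * s = of_real (1 / f)"
    using \<open>0 < f\<close> by (simp add: s_def flip: of_real_mult)
  have "qp_feasible F G (s *s p)"
    unfolding qp_feasible_def
  proof (intro conjI ballI)
    show "qform F (s *s p) = 1"
      using \<open>0 < f\<close> by (simp add: qform_scale s Fp Fv flip: of_real_mult)
    show "s *s p \<in> ker_mat G"
      using Gp by (simp add: ker_mat_def vector_scalar_commute)
    show "cinner k (s *s p) = 0" if "k \<in> ker_mat F \<inter> ker_mat G" for k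
      using orth that by (simp add: K_def cinner_scale_right)
  qed
  moreover have "Re (qform H (s *s p)) * f = Re (qform H v)"
    using pos by (simp add: qform_scale s Hp f_def)
  ultimately show thesis
    using that f_def by blast
qed

lemma ex_ratio_le_sum:
  fixes w r h :: "'a \<Rightarrow> real"
  assumes "finite I" and w: "\<And>k. k \<in> I \<Longrightarrow> 0 \<le> w k" and "sum w I = 1"
    and rh: "\<And>k. k \<in> I \<Longrightarrow> 0 < w k \<Longrightarrow> r k * w k \<le> h k" and h: "\<And>k. k \<in> I \<Longrightarrow> 0 \<le> h k"
  shows "\<exists>k\<in>I. 0 < w k \<and> r k \<le> sum h I"
proof (rule ccontr)
  assume contra: "\<not> ?thesis"
  have lt: "sum h I * w k < h k" if "k \<in> I" "0 < w k" for k
  proof -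
    have "sum h I < r k"
      using contra that by auto
    then have "sum h I * w k < r k * w k"
      using that(2) by simp
    with rh[OF that] show ?thesis by simp
  qed
  have le: "sum h I * w k \<le> h k" if "k \<in> I" for k
    using lt[OF that] h[OF that] w[OF that] by (cases "w k = 0") auto
  obtain k0 where "k0 \<in> I" and "0 < w k0"
    using \<open>sum w I = 1\<close> sum_nonpos[of I w] by (metis not_le zero_less_one)
  then have "(\<Sum>k\<in>I. sum h I * w k) < (\<Sum>k\<in>I. h k)"
    using \<open>finite I\<close> le lt by (intro sum_strict_mono_ex1) auto
  then show False
    using \<open>sum w I = 1\<close> by (simp flip: sum_distrib_left)
qed

lemma sdp_feasible_imp_ex_qp_feasible_le:
  fixes F G H X :: "complex^'n^'n"
  assumes F: "psd F" and G: "psd G" and H: "psd H" and HF: "loewner_le H F"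
    and X: "sdp_feasible F G X"
  obtains y where "qp_feasible F G y" and "Re (qform H y) \<le> Re (trace (H ** X))"
proof -
  have "psd X"
    using X by (simp add: sdp_feasible_def)
  then obtain b :: "'n \<Rightarrow> complex^'n" where Xb: "X = (\<Sum>k\<in>UNIV. outer (b k))"
    by (rule psd_eq_sum_outer)
  have trace: "trace (A ** X) = (\<Sum>k\<in>UNIV. qform A (b k))" for A
    by (simp add: Xb trace_mult_sum trace_mult_outer)
  define f where "f k = Re (qform F (b k))" for k
  define h where "h k = Re (qform H (b k))" for k
  have "(\<Sum>k\<in>UNIV. Re (qform G (b k))) = 0"
    using X by (simp add: sdp_feasible_def trace flip: Re_sum)
  then have "Re (qform G (b k)) = 0" for k
    using G by (simp add: psd_def sum_nonneg_eq_0_iff)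
  then have Gb: "G *v b k = 0" for k
    using psd_qform_eq_0_imp_kernel[OF G] psd_qform_real[OF G] by (metis of_real_0)
  have "\<forall>k. \<exists>y. 0 < f k \<longrightarrow> qp_feasible F G y \<and> Re (qform H y) * f k = h k"
    using qp_feasible_rescaled_projection[OF F H HF Gb] by (metis f_def h_def)
  then obtain y where y: "\<And>k. 0 < f k \<Longrightarrow> qp_feasible F G (y k) \<and> Re (qform H (y k)) * f k = h k"
    by metis
  have "\<exists>k\<in>UNIV. 0 < f k \<and> Re (qform H (y k)) \<le> sum h UNIV"
  proof (rule ex_ratio_le_sum)
    show "sum f UNIV = 1"
      using X by (simp add: sdp_feasible_def trace f_def flip: Re_sum)
  qed (use F H y in \<open>auto simp: f_def h_def psd_def\<close>)
  moreover have "sum h UNIV = Re (trace (H ** X))"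
    by (simp add: trace h_def Re_sum)
  ultimately show thesis
    using that y by auto
qed

lemma sdp_feasible_outer: "qp_feasible F G x \<Longrightarrow> sdp_feasible F G (outer x)"
  by (simp add: sdp_feasible_def qp_feasible_def psd_outer trace_mult_outer ker_mat_def
      qform_eq_sesq_form sesq_form_eq_cinner)

lemma cInf_eq_cInf_coinitial_subset:
  fixes S Q :: "'a::conditionally_complete_lattice set"
  assumes "Q \<subseteq> S" and "S \<noteq> {}" and "bdd_below Q" and coinitial: "\<And>s. s \<in> S \<Longrightarrow> \<exists>q\<in>Q. q \<le> s"
  shows "Inf S = Inf Q"
proof (rule antisym)
  have "Q \<noteq> {}"
    using \<open>S \<noteq> {}\<close> coinitial by blast
  moreover have "bdd_below S"
    using \<open>bdd_below Q\<close> coinitial by (meson bdd_below_def order_trans)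
  ultimately show "Inf S \<le> Inf Q"
    using \<open>Q \<subseteq> S\<close> by (rule cInf_superset_mono)
  show "Inf Q \<le> Inf S"
    using \<open>S \<noteq> {}\<close> coinitial \<open>bdd_below Q\<close> by (meson cInf_greatest cInf_lower order_trans)
qed

theorem proposition1:
  fixes F G H :: "complex^'n^'n"
  assumes "psd F" and "psd G" and "psd H"
    and "loewner_le 0 H" and "loewner_le H F"
    and "\<exists>X. sdp_feasible F G X"
  shows "sdp_value H F G = qp_value H F G
    \<and> (\<forall>x. qp_optimal H F G x \<longrightarrow> sdp_optimal H F G (outer x))"
proof
  have dominated: "\<exists>x. qp_feasible F G x \<and> Re (qform H x) \<le> Re (trace (H ** X))"
    if "sdp_feasible F G X" for X
    using sdp_feasible_imp_ex_qp_feasible_le[OF assms(1,2,3,5) that] by blast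
  show "sdp_value H F G = qp_value H F G"
    unfolding sdp_value_def qp_value_def
  proof (rule cInf_eq_cInf_coinitial_subset)
    show "{Re (qform H x) |x. qp_feasible F G x} \<subseteq> {Re (trace (H ** X)) |X. sdp_feasible F G X}"
    proof (rule subsetI)
      fix v assume "v \<in> {Re (qform H x) |x. qp_feasible F G x}"
      then obtain x where "qp_feasible F G x" and "v = Re (trace (H ** outer x))"
        by (auto simp: trace_mult_outer)
      then show "v \<in> {Re (trace (H ** X)) |X. sdp_feasible F G X}"
        using sdp_feasible_outer by blast
    qed
    show "bdd_below {Re (qform H x) |x. qp_feasible F G x}"
      using assms(3) by (auto simp: psd_def intro: bdd_belowI[of _ 0])
  qed (use assms(6) dominated in blast)+
  show "\<forall>x. qp_optimal H F G x \<longrightarrow> sdp_optimal H F G (outer x)"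
    using dominated by (fastforce simp: qp_optimal_def sdp_optimal_def sdp_feasible_outer trace_mult_outer)
qed

end
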